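(* For every $\beta>1$ and $\boldsymbol\theta_0\in\Theta_1$, the function $M_\infty:[-1,1]\times\Theta_1\to\mathbb R$, $$M_\infty(u,\boldsymbol\theta)=\frac{\boldsymbol\theta^\top\boldsymbol\theta}2+\frac{\beta u^2}2-\mathbb E_{\boldsymbol\theta_0}\log\cosh(\beta u+\boldsymbol\theta^\top\mathbf X),$$ is uniquely minimized at $(u,\boldsymbol\theta)=(m,\boldsymbol\theta_0)$.
   Context: $m=m(\beta)$ is the unique positive root of $m=\tanh(\beta m)$. $\mathbb E_{\boldsymbol\theta_0}$ denotes expectation with $\mathbf X\sim\frac{1+m}2N_d(\boldsymbol\theta_0,\mathbf I_d)+\frac{1-m}2N_d(-\boldsymbol\theta_0,\mathbf I_d)$. $\Theta_1$ is the lexicographically positive half-space $\{\theta_1>0\}\cup\{\theta_1=0,\theta_2>0\}\cup\cdots\cup\{\theta_1=\cdots=\theta_{d-1}=0,\theta_d>0\}$. *)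

theory Defs
  imports "HOL-Analysis.Analysis"
begin

text \<open>Curie-Weiss magnetization: the unique positive root of m = tanh(beta m) (beta > 1).\<close>
definition mag :: "real \<Rightarrow> real" where
  "mag \<beta> = (THE m. m > 0 \<and> m = tanh (\<beta> * m))"

definition std_gauss_density :: "real ^ 'n \<Rightarrow> real" where
  "std_gauss_density x =
     (2 * pi) powr (- real CARD('n) / 2) * exp (- (norm x)\<^sup>2 / 2)"

definition mix_density :: "real \<Rightarrow> real ^ 'n \<Rightarrow> real ^ 'n \<Rightarrow> real" where
  "mix_density \<beta> \<theta>0 x =
     (1 + mag \<beta>) / 2 * std_gauss_density (x - \<theta>0)
   + (1 - mag \<beta>) / 2 * std_gauss_density (x + \<theta>0)"

definition mix_expect :: "real \<Rightarrow> real ^ 'n \<Rightarrow> (real ^ 'n \<Rightarrow> real) \<Rightarrow> real" where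
  "mix_expect \<beta> \<theta>0 f = (\<integral>x. f x * mix_density \<beta> \<theta>0 x \<partial>lborel)"

text \<open>Lexicographically positive half-space (coordinates ordered by the linear order on 'n).\<close>
definition Theta1 :: "(real ^ 'n::{finite,linorder}) set" where
  "Theta1 = {\<theta>. \<exists>i. \<theta> $ i > 0 \<and> (\<forall>j<i. \<theta> $ j = 0)}"

definition M_infty :: "real \<Rightarrow> real ^ 'n \<Rightarrow> real \<Rightarrow> real ^ 'n \<Rightarrow> real" where
  "M_infty \<beta> \<theta>0 u \<theta> =
     (\<theta> \<bullet> \<theta>) / 2 + \<beta> * u\<^sup>2 / 2
     - mix_expect \<beta> \<theta>0 (\<lambda>x. ln (cosh (\<beta> * u + \<theta> \<bullet> x)))"

end

theory Submission
  imports Defs "HOL-Probability.Distributions"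
begin

text \<open>
  Write a = beta m and p(b, theta, x) = phi(x) cosh (b + theta . x) / (cosh b exp (|theta|^2 / 2)),
  the mixture of N(theta, I) and N(-theta, I) with weights exp (+-b) / (2 cosh b). Because
  (1 +- m) / 2 = exp (+-a) / (2 cosh a), the data density is p(a, theta0), and expanding
  ln (p(beta u, theta) / p(a, theta0)) gives
    M(u, theta) - M(m, theta0) = [g(u) - g(m)] + KL(p(a, theta0) || p(beta u, theta)),
  with g(u) = beta u^2 / 2 - ln cosh (beta u). Since g'(u) = beta (u - tanh (beta u)) and m is the
  only positive fixed point of tanh (beta x), g is strictly minimal exactly at +-m. The relative
  entropy is nonnegative (Gibbs) and vanishes only if the two densities agree; for u = +-m this
  forces +-theta = theta0, and the minus sign is excluded because Theta1 contains no pair +-theta.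
\<close>

section \<open>Integration on Euclidean space\<close>

lemma lborel_integrable_translate:
  fixes f :: "'a::euclidean_space \<Rightarrow> real"
  assumes "integrable lborel f"
  shows "integrable lborel (\<lambda>x. f (x + c))"
proof -
  have "integrable (distr lborel borel ((+) c)) f"
    using assms by (simp add: lborel_distr_plus)
  then show ?thesis
    using assms by (subst (asm) integrable_distr_eq) (auto simp: add.commute)
qed

lemma lborel_integral_translate:
  fixes f :: "'a::euclidean_space \<Rightarrow> real"
  assumes "integrable lborel f"
  shows "(\<integral>x. f (x + c) \<partial>lborel) = (\<integral>x. f x \<partial>lborel)"
proof -
  have "(\<integral>x. f x \<partial>lborel) = (\<integral>x. f x \<partial>distr lborel borel ((+) c))"
    by (simp add: lborel_distr_plus)
  also have "\<dots> = (\<integral>x. f (c + x) \<partial>lborel)"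
    using assms by (intro integral_distr) auto
  finally show ?thesis by (simp add: add.commute)
qed

lemma
  fixes f :: "'a::euclidean_space \<Rightarrow> real \<Rightarrow> real"
  assumes int: "\<And>b. b \<in> Basis \<Longrightarrow> integrable lborel (f b)"
  shows lborel_integrable_prod_Basis: "integrable lborel (\<lambda>x. \<Prod>b\<in>Basis. f b (x \<bullet> b))"
    and lborel_integral_prod_Basis:
      "(\<integral>x. (\<Prod>b\<in>Basis. f b (x \<bullet> b)) \<partial>lborel) = (\<Prod>b\<in>Basis. \<integral>t. f b t \<partial>lborel)"
proof -
  interpret product_sigma_finite "\<lambda>_. lborel" by standard
  let ?g = "\<lambda>y. \<Sum>b\<in>Basis. y b *\<^sub>R (b::'a)"
  have g: "?g \<in> measurable (\<Pi>\<^sub>M b\<in>Basis. lborel) borel" by measurable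
  have F: "(\<lambda>x::'a. \<Prod>b\<in>Basis. f b (x \<bullet> b)) \<in> borel_measurable borel"
    using int by (intro borel_measurable_prod) (auto simp: measurable_lborel1)
  have coord: "(\<Prod>b\<in>Basis. f b (?g y \<bullet> b)) = (\<Prod>b\<in>Basis. f b (y b))" for y
    by (intro prod.cong refl) (simp add: inner_sum_left inner_Basis if_distrib sum.delta cong: if_cong)
  have "integrable (\<Pi>\<^sub>M b\<in>Basis. lborel) (\<lambda>y. \<Prod>b\<in>Basis. f b (y b))"
    by (rule product_integrable_prod) (auto intro: int)
  then show "integrable lborel (\<lambda>x. \<Prod>b\<in>Basis. f b (x \<bullet> b))"
    by (subst lborel_eq, subst integrable_distr_eq[OF g F]) (simp add: coord)
  show "(\<integral>x. (\<Prod>b\<in>Basis. f b (x \<bullet> b)) \<partial>lborel) = (\<Prod>b\<in>Basis. \<integral>t. f b t \<partial>lborel)"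
    by (subst lborel_eq, subst integral_distr[OF g F], simp add: coord)
       (rule product_integral_prod, auto intro: int)
qed

lemma integral_pos_if_continuous:
  fixes h :: "'a::euclidean_space \<Rightarrow> real"
  assumes "continuous_on UNIV h" and "\<And>x. h x \<ge> 0" and "integrable lborel h" and "h x0 > 0"
  shows "integral\<^sup>L lborel h > 0"
proof -
  obtain e where "e > 0" and e: "\<And>y. dist y x0 < e \<Longrightarrow> dist (h y) (h x0) < h x0 / 2"
    using assms(1,4) unfolding continuous_on_eq_continuous_at[OF open_UNIV] continuous_at_eps_delta
    by (metis UNIV_I half_gt_zero)
  have below: "h x0 / 2 * indicator (ball x0 e) y \<le> h y" for y
  proof (cases "y \<in> ball x0 e")
    case True
    then have "\<bar>h y - h x0\<bar> < h x0 / 2"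
      using e by (simp add: dist_commute dist_real_def)
    then have "h x0 / 2 \<le> h y"
      by linarith
    with True show ?thesis by simp
  qed (simp add: assms(2))
  have "0 < h x0 / 2 * measure lborel (ball x0 e)"
    using assms(4) content_ball_pos[OF \<open>e > 0\<close>] by simp
  also have "\<dots> = (\<integral>y. h x0 / 2 * indicator (ball x0 e) y \<partial>lborel)"
    by simp
  also have "\<dots> \<le> integral\<^sup>L lborel h"
    using emeasure_lborel_ball_finite[of x0 e] below assms(3)
    by (intro integral_mono integrable_mult_right integrable_real_indicator) auto
  finally show ?thesis .
qed

lemma gibbs_inequality_lborel:
  fixes p q :: "'a::euclidean_space \<Rightarrow> real"
  assumes cont: "continuous_on UNIV p" "continuous_on UNIV q"
    and pos: "\<And>x. p x > 0" "\<And>x. q x > 0"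
    and int: "integrable lborel p" "integrable lborel q"
    and one: "integral\<^sup>L lborel p = 1" "integral\<^sup>L lborel q = 1"
    and int_ln: "integrable lborel (\<lambda>x. ln (q x / p x) * p x)"
  shows "(\<integral>x. ln (q x / p x) * p x \<partial>lborel) \<le> 0"
    and "q \<noteq> p \<Longrightarrow> (\<integral>x. ln (q x / p x) * p x \<partial>lborel) < 0"
proof -
  define h where "h x = q x - p x - ln (q x / p x) * p x" for x
  have ln_ratio: "ln (q x / p x) = ln (q x) - ln (p x)" for x
    using pos[of x] by (simp add: ln_div)
  have h_nonneg: "h x \<ge> 0" for x
    using ln_diff_le[OF pos(2)[of x] pos(1)[of x]] pos(1)[of x]
    by (simp add: h_def ln_ratio field_simps)
  have h_int: "integrable lborel h"
    unfolding h_def[abs_def] using int int_ln by auto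
  have integral_h: "integral\<^sup>L lborel h = - (\<integral>x. ln (q x / p x) * p x \<partial>lborel)"
    unfolding h_def[abs_def] using int int_ln one by simp
  show "(\<integral>x. ln (q x / p x) * p x \<partial>lborel) \<le> 0"
    using h_nonneg integral_h by (metis Bochner_Integration.integral_nonneg neg_0_le_iff_le)
  assume "q \<noteq> p"
  then obtain x0 where "q x0 \<noteq> p x0" by blast
  then have "h x0 > 0"
    using ln_diff_less[OF pos(2)[of x0] pos(1)[of x0]] pos(1)[of x0]
    by (simp add: h_def ln_ratio field_simps)
  moreover have "continuous_on UNIV h"
    unfolding h_def[abs_def] using cont pos by (intro continuous_intros) (auto simp: less_imp_neq[symmetric])
  ultimately have "integral\<^sup>L lborel h > 0"
    using h_nonneg h_int by (intro integral_pos_if_continuous) auto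
  then show "(\<integral>x. ln (q x / p x) * p x \<partial>lborel) < 0"
    using integral_h by simp
qed

section \<open>The standard Gaussian density\<close>

lemma std_gauss_density_pos: "std_gauss_density x > 0"
  unfolding std_gauss_density_def by simp

lemma std_gauss_density_nonzero[simp]: "std_gauss_density x \<noteq> 0"
  using std_gauss_density_pos[of x] by simp

lemma continuous_on_std_gauss_density: "continuous_on UNIV std_gauss_density"
  unfolding std_gauss_density_def by (intro continuous_intros) auto

lemma borel_measurable_std_gauss_density[measurable]: "std_gauss_density \<in> borel_measurable borel"
  by (rule borel_measurable_continuous_onI[OF continuous_on_std_gauss_density])

lemma std_gauss_density_prod_Basis:
  "std_gauss_density (x::real^'n) = (\<Prod>b\<in>Basis. std_normal_density (x \<bullet> b))"
proof -
  have "(2 * pi) powr (- real CARD('n) / 2) = ((2 * pi) powr (-1/2)) ^ CARD('n)"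
    by (simp add: powr_realpow[symmetric] powr_powr)
  also have "\<dots> = (1 / sqrt (2 * pi)) ^ card (Basis :: (real^'n) set)"
    by (simp add: powr_minus_divide powr_half_sqrt)
  finally have const:
    "(2 * pi) powr (- real CARD('n) / 2) = (1 / sqrt (2 * pi)) ^ card (Basis :: (real^'n) set)" .
  have "(norm x)\<^sup>2 = (\<Sum>b\<in>Basis. (x \<bullet> b)\<^sup>2)"
    unfolding power2_norm_eq_inner by (subst euclidean_inner) (simp add: power2_eq_square)
  then have "- (norm x)\<^sup>2 / 2 = (\<Sum>b\<in>Basis. - (x \<bullet> b)\<^sup>2 / 2)"
    by (simp add: sum_negf sum_divide_distrib)
  then have "exp (- (norm x)\<^sup>2 / 2) = (\<Prod>b\<in>Basis. exp (- (x \<bullet> b)\<^sup>2 / 2))"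
    by (simp add: exp_sum)
  with const show ?thesis
    unfolding std_gauss_density_def std_normal_density_def by (simp add: prod_dividef power_one_over)
qed

lemma integrable_std_gauss_density: "integrable lborel (std_gauss_density :: real^'n \<Rightarrow> real)"
  unfolding std_gauss_density_prod_Basis by (rule lborel_integrable_prod_Basis) simp

lemma integral_std_gauss_density: "(\<integral>x. std_gauss_density (x::real^'n) \<partial>lborel) = 1"
  unfolding std_gauss_density_prod_Basis by (subst lborel_integral_prod_Basis) auto

lemma integrable_std_gauss_density_abs_inner_Basis:
  assumes "c \<in> Basis"
  shows "integrable lborel (\<lambda>x::real^'n. std_gauss_density x * \<bar>x \<bullet> c\<bar>)"
proof -
  let ?f = "\<lambda>b t. std_normal_density t * (if b = c then \<bar>t\<bar> else 1)"
  have "integrable lborel (?f b)" for b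
    using integrable_std_normal_moment_abs[of 1] by (cases "b = c") auto
  then have "integrable lborel (\<lambda>x::real^'n. \<Prod>b\<in>Basis. ?f b (x \<bullet> b))"
    by (rule lborel_integrable_prod_Basis)
  moreover have "(\<Prod>b\<in>Basis. ?f b (x \<bullet> b)) = std_gauss_density x * \<bar>x \<bullet> c\<bar>" for x :: "real^'n"
    unfolding std_gauss_density_prod_Basis prod.distrib using assms
    by (simp add: prod.If_cases Int_absorb1 prod.delta)
  ultimately show ?thesis by simp
qed

lemma integrable_std_gauss_density_norm:
  "integrable lborel (\<lambda>x::real^'n. std_gauss_density x * norm x)"
proof (rule Bochner_Integration.integrable_bound)
  show "integrable lborel (\<lambda>x::real^'n. \<Sum>c\<in>Basis. std_gauss_density x * \<bar>x \<bullet> c\<bar>)"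
    by (intro Bochner_Integration.integrable_sum integrable_std_gauss_density_abs_inner_Basis)
  show "AE x in lborel. norm (std_gauss_density x * norm x)
          \<le> norm (\<Sum>c\<in>Basis. std_gauss_density x * \<bar>x \<bullet> c\<bar>)"
    using std_gauss_density_pos norm_le_l1
    by (intro AE_I2) (auto simp: abs_mult sum_distrib_left[symmetric] intro!: mult_left_mono)
qed simp

lemma std_gauss_density_diff:
  "std_gauss_density (x - \<theta>) = std_gauss_density x * exp (\<theta> \<bullet> x) * exp (- (\<theta> \<bullet> \<theta>) / 2)"
proof -
  have expand: "- (norm (x - \<theta>))\<^sup>2 / 2 = - (norm x)\<^sup>2 / 2 + \<theta> \<bullet> x + - (\<theta> \<bullet> \<theta>) / 2"
    by (simp add: power2_norm_eq_inner inner_diff_left inner_diff_right inner_commute field_simps)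
  show ?thesis unfolding std_gauss_density_def expand exp_add by (simp add: mult_ac)
qed

lemma integrable_std_gauss_density_translate:
  "integrable lborel (\<lambda>x. std_gauss_density (x + c))"
  "integrable lborel (\<lambda>x. std_gauss_density (x + c) * norm x)"
proof -
  show "integrable lborel (\<lambda>x. std_gauss_density (x + c))"
    by (rule lborel_integrable_translate[OF integrable_std_gauss_density])
  have "integrable lborel (\<lambda>y. std_gauss_density y * norm (y - c))"
  proof (rule Bochner_Integration.integrable_bound)
    show "integrable lborel (\<lambda>y. std_gauss_density y * norm y + norm c * std_gauss_density y)"
      using integrable_std_gauss_density_norm integrable_std_gauss_density by auto
    show "AE y in lborel. norm (std_gauss_density y * norm (y - c))
            \<le> norm (std_gauss_density y * norm y + norm c * std_gauss_density y)"
      using std_gauss_density_pos norm_triangle_ineq4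
      by (intro AE_I2)
        (auto simp: abs_mult mult.commute[of "norm c"] distrib_left[symmetric] intro!: mult_left_mono)
  qed simp
  from lborel_integrable_translate[OF this, of c]
  show "integrable lborel (\<lambda>x. std_gauss_density (x + c) * norm x)" by simp
qed

lemma integral_std_gauss_density_translate:
  "(\<integral>x. std_gauss_density (x + c) \<partial>lborel) = 1"
  by (simp add: lborel_integral_translate[OF integrable_std_gauss_density] integral_std_gauss_density)

section \<open>Symmetric two-component Gaussian mixtures\<close>

lemma borel_measurable_cosh[measurable]: "(cosh :: real \<Rightarrow> real) \<in> borel_measurable borel"
  by (intro borel_measurable_continuous_onI continuous_intros)

lemma ln_cosh_nonneg: "0 \<le> ln (cosh (y::real))"
  using cosh_real_ge_1[of y] by simp

lemma ln_cosh_le_abs: "ln (cosh y) \<le> \<bar>y::real\<bar>"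
proof -
  have "cosh y = (exp \<bar>y\<bar> + exp (- \<bar>y\<bar>)) / 2"
    by (metis cosh_real_abs cosh_field_def)
  also have "\<dots> \<le> exp \<bar>y\<bar>"
    by simp
  finally show ?thesis
    by (metis cosh_real_pos exp_gt_zero ln_exp ln_le_cancel_iff)
qed

definition gauss_mix :: "real \<Rightarrow> real ^ 'n \<Rightarrow> real ^ 'n \<Rightarrow> real" where
  "gauss_mix a \<theta> x =
     (exp a * std_gauss_density (x - \<theta>) + exp (- a) * std_gauss_density (x + \<theta>)) / (2 * cosh a)"

lemma gauss_mix_eq_cosh:
  "gauss_mix a \<theta> x = std_gauss_density x * cosh (a + \<theta> \<bullet> x) / (cosh a * exp (\<theta> \<bullet> \<theta> / 2))"
proof -
  have plus: "std_gauss_density (x + \<theta>) = std_gauss_density x * exp (- (\<theta> \<bullet> x)) * exp (- (\<theta> \<bullet> \<theta>) / 2)"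
    using std_gauss_density_diff[of x "- \<theta>"] by simp
  have exp_half: "exp (- (\<theta> \<bullet> \<theta>) / 2) = 1 / exp (\<theta> \<bullet> \<theta> / 2)"
    by (simp add: exp_minus field_simps)
  have cosh: "cosh (a + \<theta> \<bullet> x) = (exp a * exp (\<theta> \<bullet> x) + exp (- a) * exp (- (\<theta> \<bullet> x))) / 2"
    by (simp add: cosh_field_def exp_add[symmetric])
  show ?thesis
    unfolding gauss_mix_def std_gauss_density_diff plus exp_half cosh by (simp add: field_simps)
qed

lemma gauss_mix_pos: "gauss_mix a \<theta> x > 0"
  unfolding gauss_mix_eq_cosh using std_gauss_density_pos[of x] by simp

lemma continuous_on_gauss_mix: "continuous_on UNIV (gauss_mix a \<theta>)"
  unfolding gauss_mix_eq_cosh[abs_def] by (intro continuous_intros continuous_on_std_gauss_density) auto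

lemma borel_measurable_gauss_mix[measurable]: "gauss_mix a \<theta> \<in> borel_measurable borel"
  by (rule borel_measurable_continuous_onI[OF continuous_on_gauss_mix])

lemma integrable_gauss_mix:
  "integrable lborel (gauss_mix a \<theta>)"
  "integrable lborel (\<lambda>x. gauss_mix a \<theta> x * norm x)"
proof -
  note translates = integrable_std_gauss_density_translate[of "- \<theta>", simplified]
    integrable_std_gauss_density_translate[of \<theta>]
  show "integrable lborel (gauss_mix a \<theta>)"
    unfolding gauss_mix_def[abs_def] using translates by simp
  have "gauss_mix a \<theta> x * norm x =
      (exp a * (std_gauss_density (x - \<theta>) * norm x) + exp (- a) * (std_gauss_density (x + \<theta>) * norm x))
        / (2 * cosh a)" for x
    by (simp add: gauss_mix_def field_simps)
  then show "integrable lborel (\<lambda>x. gauss_mix a \<theta> x * norm x)"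
    using translates by simp
qed

lemma integral_gauss_mix: "(\<integral>x. gauss_mix a \<theta> x \<partial>lborel) = 1"
proof -
  have "(\<integral>x. gauss_mix a \<theta> x \<partial>lborel) = (exp a + exp (- a)) / (2 * cosh a)"
    unfolding gauss_mix_def
    using integrable_std_gauss_density_translate(1)[of "- \<theta>"] integrable_std_gauss_density_translate(1)[of \<theta>]
      integral_std_gauss_density_translate[of "- \<theta>"] integral_std_gauss_density_translate[of \<theta>]
    by simp
  also have "exp a + exp (- a) = 2 * cosh a"
    by (simp add: cosh_field_def)
  finally show ?thesis by simp
qed

lemma gauss_mix_uminus: "gauss_mix (- a) \<theta> = gauss_mix a (- \<theta>)"
  unfolding gauss_mix_def by (auto simp: add.commute)

lemma mix_density_eq_gauss_mix:
  assumes "mag \<beta> = tanh a"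
  shows "mix_density \<beta> \<theta> = gauss_mix a \<theta>"
proof -
  have "(1 + mag \<beta>) / 2 = exp a / (2 * cosh a)" "(1 - mag \<beta>) / 2 = exp (- a) / (2 * cosh a)"
    unfolding assms tanh_def by (simp_all add: field_simps cosh_plus_sinh cosh_minus_sinh)
  then show ?thesis
    unfolding mix_density_def gauss_mix_def by (simp add: fun_eq_iff add_divide_distrib)
qed

lemma gauss_mix_inj:
  assumes "a > 0" and eq: "gauss_mix a \<theta> = gauss_mix a \<theta>'"
  shows "\<theta> = \<theta>'"
proof (rule ccontr)
  assume "\<theta> \<noteq> \<theta>'"
  have "exp (\<theta> \<bullet> \<theta> / 2) = exp (\<theta>' \<bullet> \<theta>' / 2)"
    using fun_cong[OF eq, of 0] unfolding gauss_mix_eq_cosh by simp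
  then have same_norm: "\<theta> \<bullet> \<theta> = \<theta>' \<bullet> \<theta>'" by simp
  \<comment> \<open>at x = theta - theta' the two cosh factors become cosh (a + t) and cosh (a - t) with t > 0\<close>
  define x where "x = \<theta> - \<theta>'"
  have "cosh (a + \<theta> \<bullet> x) = cosh (a + \<theta>' \<bullet> x)"
    using fun_cong[OF eq, of x] unfolding gauss_mix_eq_cosh same_norm by simp
  moreover have "\<theta>' \<bullet> x = - (\<theta> \<bullet> x)"
    using same_norm by (simp add: x_def inner_diff_right inner_commute)
  moreover have "\<theta> \<bullet> x > 0"
  proof -
    have "2 * (\<theta> \<bullet> x) = x \<bullet> x"
      using same_norm by (simp add: x_def inner_diff_left inner_diff_right inner_commute)
    moreover have "x \<bullet> x > 0" using \<open>\<theta> \<noteq> \<theta>'\<close> by (simp add: x_def)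
    ultimately show ?thesis by linarith
  qed
  ultimately show False using \<open>a > 0\<close> by (simp add: abs_if split: if_splits)
qed

lemma integrable_ln_cosh_gauss_mix:
  "integrable lborel (\<lambda>x. ln (cosh (b + t \<bullet> x)) * gauss_mix a \<theta> x)"
proof (rule Bochner_Integration.integrable_bound)
  show "integrable lborel (\<lambda>x. \<bar>b\<bar> * gauss_mix a \<theta> x + norm t * (gauss_mix a \<theta> x * norm x))"
    by (intro Bochner_Integration.integrable_add integrable_mult_right integrable_gauss_mix)
  have "norm (ln (cosh (b + t \<bullet> x)) * gauss_mix a \<theta> x)
      \<le> norm (\<bar>b\<bar> * gauss_mix a \<theta> x + norm t * (gauss_mix a \<theta> x * norm x))" for x
  proof -
    have "ln (cosh (b + t \<bullet> x)) \<le> \<bar>b\<bar> + norm t * norm x"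
      using ln_cosh_le_abs[of "b + t \<bullet> x"] abs_triangle_ineq[of b "t \<bullet> x"] Cauchy_Schwarz_ineq2[of t x]
      by linarith
    then have "ln (cosh (b + t \<bullet> x)) * gauss_mix a \<theta> x \<le> (\<bar>b\<bar> + norm t * norm x) * gauss_mix a \<theta> x"
      using gauss_mix_pos[of a \<theta> x] by (intro mult_right_mono) auto
    then show ?thesis
      using gauss_mix_pos[of a \<theta> x] ln_cosh_nonneg[of "b + t \<bullet> x"] by (simp add: algebra_simps)
  qed
  then show "AE x in lborel. norm (ln (cosh (b + t \<bullet> x)) * gauss_mix a \<theta> x)
      \<le> norm (\<bar>b\<bar> * gauss_mix a \<theta> x + norm t * (gauss_mix a \<theta> x * norm x))"
    by simp
qed measurable

lemma ln_gauss_mix_ratio: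
  "ln (gauss_mix a \<theta> x / gauss_mix a0 \<theta>0 x) =
     ln (cosh (a + \<theta> \<bullet> x)) - ln (cosh (a0 + \<theta>0 \<bullet> x))
     - (ln (cosh a) + \<theta> \<bullet> \<theta> / 2) + (ln (cosh a0) + \<theta>0 \<bullet> \<theta>0 / 2)"
proof -
  have "gauss_mix a \<theta> x / gauss_mix a0 \<theta>0 x
      = cosh (a + \<theta> \<bullet> x) * (cosh a0 * exp (\<theta>0 \<bullet> \<theta>0 / 2))
        / (cosh (a0 + \<theta>0 \<bullet> x) * (cosh a * exp (\<theta> \<bullet> \<theta> / 2)))"
    unfolding gauss_mix_eq_cosh by (simp add: field_simps)
  then show ?thesis by (simp add: ln_div ln_mult)
qed

lemma integrable_ln_gauss_mix_ratio:
  "integrable lborel (\<lambda>x. ln (gauss_mix a \<theta> x / gauss_mix a0 \<theta>0 x) * gauss_mix a0 \<theta>0 x)"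
  unfolding ln_gauss_mix_ratio ring_distribs
  by (intro Bochner_Integration.integrable_add Bochner_Integration.integrable_diff integrable_mult_right
      integrable_ln_cosh_gauss_mix integrable_gauss_mix)

lemma integral_ln_gauss_mix_ratio:
  "(\<integral>x. ln (gauss_mix a \<theta> x / gauss_mix a0 \<theta>0 x) * gauss_mix a0 \<theta>0 x \<partial>lborel) =
     (\<integral>x. ln (cosh (a + \<theta> \<bullet> x)) * gauss_mix a0 \<theta>0 x \<partial>lborel)
     - (\<integral>x. ln (cosh (a0 + \<theta>0 \<bullet> x)) * gauss_mix a0 \<theta>0 x \<partial>lborel)
     - (ln (cosh a) + \<theta> \<bullet> \<theta> / 2) + (ln (cosh a0) + \<theta>0 \<bullet> \<theta>0 / 2)"
  unfolding ln_gauss_mix_ratio ring_distribs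
  by (simp add: integrable_ln_cosh_gauss_mix integrable_gauss_mix integral_gauss_mix
      Bochner_Integration.integral_add Bochner_Integration.integral_diff)

section \<open>The Curie-Weiss fixed point\<close>

lemma DERIV_tanh_scaled_minus_id:
  fixes \<beta> x :: real
  shows "DERIV (\<lambda>x. tanh (\<beta> * x) - x) x :> \<beta> * (1 - (tanh (\<beta> * x))\<^sup>2) - 1"
  by (auto intro!: derivative_eq_intros)

lemma tanh_scaled_gt_id_near_0:
  fixes \<beta> :: real
  assumes "\<beta> > 1"
  obtains d where "d > 0" and "\<And>x. 0 < x \<Longrightarrow> x < d \<Longrightarrow> x < tanh (\<beta> * x)"
proof -
  have "DERIV (\<lambda>x. tanh (\<beta> * x) - x) 0 :> \<beta> - 1"
    using DERIV_tanh_scaled_minus_id[of \<beta> 0] by simp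
  from DERIV_pos_inc_right[OF this] assms obtain d
    where "d > 0" and "\<forall>h>0. h < d \<longrightarrow> tanh (\<beta> * 0) - 0 < tanh (\<beta> * (0 + h)) - (0 + h)"
    by auto
  with that show ?thesis by auto
qed

lemma tanh_scaled_fixpoint_exists:
  fixes \<beta> :: real
  assumes "\<beta> > 1"
  shows "\<exists>m>0. tanh (\<beta> * m) = m"
proof -
  obtain d where "d > 0" and small: "\<And>x. 0 < x \<Longrightarrow> x < d \<Longrightarrow> x < tanh (\<beta> * x)"
    using tanh_scaled_gt_id_near_0[OF assms] by blast
  define c where "c = min (d / 2) 1"
  have "0 < c" "c \<le> 1" "c < tanh (\<beta> * c)"
    using \<open>d > 0\<close> small[of c] by (auto simp: c_def)
  moreover have "tanh (\<beta> * 1) - 1 < 0"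
    using tanh_real_lt_1[of \<beta>] by simp
  ultimately obtain m where "c \<le> m" "m \<le> 1" "tanh (\<beta> * m) - m = 0"
    using IVT2[of "\<lambda>x. tanh (\<beta> * x) - x" 1 0 c] by (force intro: continuous_intros)
  with \<open>0 < c\<close> show ?thesis by (auto intro!: exI[of _ m])
qed

lemma tanh_scaled_fixpoint_unique:
  fixes \<beta> :: real
  assumes "\<beta> > 1" and "0 < x" "0 < y" and "tanh (\<beta> * x) = x" "tanh (\<beta> * y) = y"
  shows "x = y"
proof -
  let ?f' = "\<lambda>t. \<beta> * (1 - (tanh (\<beta> * t))\<^sup>2) - 1"
  \<comment> \<open>roots 0 < x < y of tanh (beta t) - t give, besides the root 0, two critical points
      0 < z1 < z2; but the derivative is injective on the positive axis\<close>
  have False if roots: "0 < x" "x < y" "tanh (\<beta> * x) = x" "tanh (\<beta> * y) = y" for x y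
  proof -
    obtain z1 where z1: "0 < z1" "z1 < x"
      and "(tanh (\<beta> * x) - x) - (tanh (\<beta> * 0) - 0) = (x - 0) * ?f' z1"
      using MVT2[of 0 x "\<lambda>t. tanh (\<beta> * t) - t" ?f'] roots(1) DERIV_tanh_scaled_minus_id by blast
    with roots have "?f' z1 = 0" by simp
    obtain z2 where z2: "x < z2" "z2 < y"
      and "(tanh (\<beta> * y) - y) - (tanh (\<beta> * x) - x) = (y - x) * ?f' z2"
      using MVT2[of x y "\<lambda>t. tanh (\<beta> * t) - t" ?f'] roots(2) DERIV_tanh_scaled_minus_id by blast
    with roots have "?f' z2 = 0" by simp
    have "0 < tanh (\<beta> * z1)" "tanh (\<beta> * z1) < tanh (\<beta> * z2)"
      using z1 z2 \<open>\<beta> > 1\<close> by auto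
    then have "(tanh (\<beta> * z1))\<^sup>2 < (tanh (\<beta> * z2))\<^sup>2"
      by (intro power_strict_mono) auto
    moreover have "\<beta> * (1 - (tanh (\<beta> * z1))\<^sup>2) = \<beta> * (1 - (tanh (\<beta> * z2))\<^sup>2)"
      using \<open>?f' z1 = 0\<close> \<open>?f' z2 = 0\<close> by simp
    ultimately show False using \<open>\<beta> > 1\<close> by simp
  qed
  with assms show ?thesis by (metis linorder_neqE)
qed

lemma mag_eq_iff:
  fixes \<beta> :: real
  assumes "\<beta> > 1" and "x > 0"
  shows "mag \<beta> = x \<longleftrightarrow> tanh (\<beta> * x) = x"
proof -
  obtain m where m: "m > 0" "tanh (\<beta> * m) = m"
    using tanh_scaled_fixpoint_exists[OF assms(1)] by blast
  have "mag \<beta> = m"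
    unfolding mag_def
    by (rule the_equality) (use m tanh_scaled_fixpoint_unique[OF assms(1)] in auto)
  with m assms show ?thesis
    using tanh_scaled_fixpoint_unique[OF assms(1)] by metis
qed

lemma
  fixes \<beta> :: real
  assumes "\<beta> > 1"
  shows mag_pos: "mag \<beta> > 0" and tanh_mag: "tanh (\<beta> * mag \<beta>) = mag \<beta>"
  using tanh_scaled_fixpoint_exists[OF assms] mag_eq_iff[OF assms] by auto

lemma tanh_scaled_gt_id_below_mag:
  fixes \<beta> :: real
  assumes "\<beta> > 1" and "0 < x" "x < mag \<beta>"
  shows "x < tanh (\<beta> * x)"
proof (rule ccontr)
  assume not_less: "\<not> x < tanh (\<beta> * x)"
  obtain d where "d > 0" and small: "\<And>x. 0 < x \<Longrightarrow> x < d \<Longrightarrow> x < tanh (\<beta> * x)"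
    using tanh_scaled_gt_id_near_0[OF assms(1)] by blast
  define c where "c = min x d / 2"
  have "0 < c" "c < x" "0 < tanh (\<beta> * c) - c"
    using \<open>d > 0\<close> \<open>0 < x\<close> small[of c] by (auto simp: c_def)
  with not_less obtain z where "c \<le> z" "z \<le> x" "tanh (\<beta> * z) - z = 0"
    using IVT2[of "\<lambda>t. tanh (\<beta> * t) - t" x 0 c] by (force intro: continuous_intros)
  with \<open>0 < c\<close> assms show False
    using mag_eq_iff[OF assms(1), of z] by auto
qed

lemma tanh_scaled_lt_id_above_mag:
  fixes \<beta> :: real
  assumes "\<beta> > 1" and "mag \<beta> < x"
  shows "tanh (\<beta> * x) < x"
proof (rule ccontr)
  assume not_less: "\<not> tanh (\<beta> * x) < x"
  then have "x < 1"
    using tanh_real_lt_1[of "\<beta> * x"] by linarith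
  moreover have "tanh (\<beta> * 1) - 1 < 0"
    using tanh_real_lt_1[of \<beta>] by simp
  ultimately obtain z where "x \<le> z" "z \<le> 1" "tanh (\<beta> * z) - z = 0"
    using not_less IVT2[of "\<lambda>t. tanh (\<beta> * t) - t" 1 0 x] by (force intro: continuous_intros)
  with assms mag_pos[OF assms(1)] show False
    using mag_eq_iff[OF assms(1), of z] by auto
qed

definition cw_energy :: "real \<Rightarrow> real \<Rightarrow> real" where
  "cw_energy \<beta> u = \<beta> * u\<^sup>2 / 2 - ln (cosh (\<beta> * u))"

lemma DERIV_cw_energy: "DERIV (cw_energy \<beta>) u :> \<beta> * (u - tanh (\<beta> * u))"
  unfolding cw_energy_def[abs_def]
  by (auto intro!: derivative_eq_intros simp: tanh_def field_simps power2_eq_square)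

lemma cw_energy_abs: "cw_energy \<beta> \<bar>u\<bar> = cw_energy \<beta> u"
  unfolding cw_energy_def by (cases "u \<ge> 0") auto

lemma cw_energy_strict_min:
  fixes \<beta> :: real
  assumes "\<beta> > 1" and "\<bar>u\<bar> \<noteq> mag \<beta>"
  shows "cw_energy \<beta> (mag \<beta>) < cw_energy \<beta> u"
proof -
  let ?m = "mag \<beta>"
  have "cw_energy \<beta> ?m < cw_energy \<beta> v" if "v \<ge> 0" "v \<noteq> ?m" for v
  proof (cases "v < ?m")
    case True
    then obtain z where z: "v < z" "z < ?m"
      and mvt: "cw_energy \<beta> ?m - cw_energy \<beta> v = (?m - v) * (\<beta> * (z - tanh (\<beta> * z)))"
      using MVT2[of v ?m "cw_energy \<beta>" "\<lambda>z. \<beta> * (z - tanh (\<beta> * z))"] DERIV_cw_energy by blast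
    have "(?m - v) * (\<beta> * (tanh (\<beta> * z) - z)) > 0"
      using True z \<open>v \<ge> 0\<close> assms(1) tanh_scaled_gt_id_below_mag[OF assms(1), of z] by simp
    with mvt show ?thesis by (simp add: algebra_simps)
  next
    case False
    with that have "?m < v" by simp
    then obtain z where z: "?m < z" "z < v"
      and mvt: "cw_energy \<beta> v - cw_energy \<beta> ?m = (v - ?m) * (\<beta> * (z - tanh (\<beta> * z)))"
      using MVT2[of ?m v "cw_energy \<beta>" "\<lambda>z. \<beta> * (z - tanh (\<beta> * z))"] DERIV_cw_energy by blast
    have "(v - ?m) * (\<beta> * (z - tanh (\<beta> * z))) > 0"
      using \<open>?m < v\<close> z assms(1) tanh_scaled_lt_id_above_mag[OF assms(1), of z] by simp
    with mvt show ?thesis by simp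
  qed
  from this[of "\<bar>u\<bar>"] assms(2) show ?thesis by (simp add: cw_energy_abs)
qed

section \<open>Minimization of M_infty\<close>

lemma uminus_notin_Theta1:
  fixes \<theta> :: "real ^ 'n::{finite,linorder}"
  assumes "\<theta> \<in> Theta1"
  shows "- \<theta> \<notin> Theta1"
proof
  assume "- \<theta> \<in> Theta1"
  obtain i where i: "\<theta> $ i > 0" "\<forall>j<i. \<theta> $ j = 0"
    using assms unfolding Theta1_def by blast
  obtain k where k: "\<theta> $ k < 0" "\<forall>j<k. \<theta> $ j = 0"
    using \<open>- \<theta> \<in> Theta1\<close> unfolding Theta1_def by auto
  show False
  proof (cases i k rule: linorder_cases)
    case less with i k show False by simp
  next
    case equal with i k show False by simp
  next
    case greater with i k show False by simp
  qed
qed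

lemma gauss_mix_identifiable_Theta1:
  fixes \<theta> \<theta>' :: "real ^ 'n::{finite,linorder}"
  assumes "a > 0" and "\<bar>b\<bar> = a" and "\<theta> \<in> Theta1" "\<theta>' \<in> Theta1"
    and eq: "gauss_mix b \<theta> = gauss_mix a \<theta>'"
  shows "b = a \<and> \<theta> = \<theta>'"
proof (cases "b = a")
  case True
  with eq show ?thesis using gauss_mix_inj[OF assms(1)] by simp
next
  case False
  with assms have "b = - a" by linarith
  with eq have "gauss_mix a (- \<theta>) = gauss_mix a \<theta>'"
    by (simp add: gauss_mix_uminus)
  then have "- \<theta> = \<theta>'" by (rule gauss_mix_inj[OF \<open>a > 0\<close>])
  with assms(3,4) show ?thesis using uminus_notin_Theta1 by blast
qed

lemma M_infty_diff_eq:
  assumes "tanh (\<beta> * mag \<beta>) = mag \<beta>"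
  shows "M_infty \<beta> \<theta>0 u \<theta> - M_infty \<beta> \<theta>0 (mag \<beta>) \<theta>0 =
    cw_energy \<beta> u - cw_energy \<beta> (mag \<beta>)
    - (\<integral>x. ln (gauss_mix (\<beta> * u) \<theta> x / gauss_mix (\<beta> * mag \<beta>) \<theta>0 x)
          * gauss_mix (\<beta> * mag \<beta>) \<theta>0 x \<partial>lborel)"
proof -
  have "mix_density \<beta> \<theta>0 = gauss_mix (\<beta> * mag \<beta>) \<theta>0"
    using assms by (intro mix_density_eq_gauss_mix) simp
  then show ?thesis
    unfolding M_infty_def mix_expect_def integral_ln_gauss_mix_ratio cw_energy_def by simp
qed

lemma M_infty_strict_min:
  fixes \<theta>0 \<theta> :: "real ^ 'n::{finite,linorder}"
  assumes "\<beta> > 1" and "\<theta>0 \<in> Theta1" "\<theta> \<in> Theta1" and "(u, \<theta>) \<noteq> (mag \<beta>, \<theta>0)"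
  shows "M_infty \<beta> \<theta>0 (mag \<beta>) \<theta>0 < M_infty \<beta> \<theta>0 u \<theta>"
proof -
  let ?m = "mag \<beta>"
  let ?p = "gauss_mix (\<beta> * ?m) \<theta>0" and ?q = "gauss_mix (\<beta> * u) \<theta>"
  note gibbs = gibbs_inequality_lborel[of ?p ?q, OF continuous_on_gauss_mix continuous_on_gauss_mix
      gauss_mix_pos gauss_mix_pos integrable_gauss_mix(1) integrable_gauss_mix(1)
      integral_gauss_mix integral_gauss_mix integrable_ln_gauss_mix_ratio]
  note diff = M_infty_diff_eq[OF tanh_mag[OF assms(1)], of \<theta>0 u \<theta>]
  show ?thesis
  proof (cases "\<bar>u\<bar> = ?m")
    case True
    have "\<beta> * ?m > 0" and "\<bar>\<beta> * u\<bar> = \<beta> * ?m"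
      using mag_pos[OF assms(1)] assms(1) True by (simp_all add: abs_mult)
    then have "?q \<noteq> ?p"
      using gauss_mix_identifiable_Theta1[of "\<beta> * ?m" "\<beta> * u" \<theta> \<theta>0] assms by auto
    moreover have "cw_energy \<beta> u = cw_energy \<beta> ?m"
      using True cw_energy_abs[of \<beta> u] by simp
    ultimately show ?thesis
      using gibbs(2) diff by linarith
  next
    case False
    then show ?thesis
      using cw_energy_strict_min[OF assms(1)] gibbs(1) diff by fastforce
  qed
qed

theorem mainTheorem7:
  fixes \<beta> :: real and \<theta>0 :: "real ^ 'n::{finite,linorder}"
  assumes "\<beta> > 1" and "\<theta>0 \<in> Theta1"
  shows "mag \<beta> \<in> {-1..1} \<and>
         (\<forall>u\<in>{-1..1}. \<forall>\<theta>\<in>Theta1. (u, \<theta>) \<noteq> (mag \<beta>, \<theta>0) \<longrightarrow>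
            M_infty \<beta> \<theta>0 (mag \<beta>) \<theta>0 < M_infty \<beta> \<theta>0 u \<theta>)"
proof -
  have "mag \<beta> \<in> {-1..1}"
    using tanh_mag[OF assms(1)] tanh_real_bounds[of "\<beta> * mag \<beta>"] by simp
  with M_infty_strict_min[OF assms] show ?thesis
    by blast
qed

end
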